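(* Let $\mathcal X\subseteq\mathbb R$ be an interval, $\omega\ge0$ a weight on $\mathcal X$, $Q(\phi)=\int_{\mathcal X}\phi(x)\omega(x)dx$, and $Q_N(\phi)=\sum_{i=0}^N\omega_{N,i}\phi(x_{N,i})$ with distinct nodes $x_{N,i}\in\mathcal X$ and real weights $\omega_{N,i}$. Assume $Q_N(\phi)=Q(\phi)$ for all $\phi\in P_{2N}$. Let $I_N$ be the interpolation operator onto $P_N$ at the nodes $x_{N,0},\dots,x_{N,N}$. Let $\phi_1,\phi_2$ be real continuous functions on $\mathcal X$ with $\phi_1,\phi_2\in L^2_\omega(\mathcal X)$ and $P_N\subset L^2_\omega(\mathcal X)$; set $\phi=\phi_1\phi_2$, $\psi_1=I_N\phi_1$, $\psi_2=I_N\phi_2$. Then $$|Q(\phi)-Q_N(\phi)|\le\bigl(\|\phi_1\|_\omega+\|\phi_2\|_\omega+\|\psi_1\|_\omega+\|\psi_2\|_\omega\bigr)\bigl(\|\phi_1-\psi_1\|_\omega+\|\phi_2-\psi_2\|_\omega\bigr).$$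
   Context: $P_K$ is the space of real polynomials of degree at most $K$; $\|f\|_\omega=(\int_{\mathcal X}|f|^2\omega)^{1/2}$. *)

theory Defs
  imports "HOL-Analysis.Analysis" "HOL-Computational_Algebra.Polynomial"
begin

definition wint :: "real set \<Rightarrow> (real \<Rightarrow> real) \<Rightarrow> (real \<Rightarrow> real) \<Rightarrow> real" where
  "wint X w f = (LINT t:X|lborel. f t * w t)"

definition wnorm :: "real set \<Rightarrow> (real \<Rightarrow> real) \<Rightarrow> (real \<Rightarrow> real) \<Rightarrow> real" where
  "wnorm X w f = sqrt (LINT t:X|lborel. (f t)^2 * w t)"

definition in_L2w :: "real set \<Rightarrow> (real \<Rightarrow> real) \<Rightarrow> (real \<Rightarrow> real) \<Rightarrow> bool" where
  "in_L2w X w f \<longleftrightarrow> set_borel_measurable lborel X f \<and> set_integrable lborel X (\<lambda>t. (f t)^2 * w t)"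

definition interp :: "(nat \<Rightarrow> real) \<Rightarrow> nat \<Rightarrow> (real \<Rightarrow> real) \<Rightarrow> real \<Rightarrow> real" where
  "interp x N f = poly (THE p. degree p \<le> N \<and> (\<forall>i\<le>N. poly p (x i) = f (x i)))"

end

theory Submission
  imports Defs
begin

text \<open>
  Since \<open>\<psi>\<^sub>i = I\<^sub>N \<phi>\<^sub>i\<close> agrees with \<open>\<phi>\<^sub>i\<close> at the nodes, \<open>Q\<^sub>N(\<phi>\<^sub>1\<phi>\<^sub>2) = Q\<^sub>N(\<psi>\<^sub>1\<psi>\<^sub>2)\<close>, and this equals
  \<open>Q(\<psi>\<^sub>1\<psi>\<^sub>2)\<close> because \<open>\<psi>\<^sub>1\<psi>\<^sub>2 \<in> P\<^sub>2\<^sub>N\<close>. The error is therefore \<open>Q(\<phi>\<^sub>1\<phi>\<^sub>2 - \<psi>\<^sub>1\<psi>\<^sub>2)\<close>, and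
  writing \<open>\<phi>\<^sub>1\<phi>\<^sub>2 - \<psi>\<^sub>1\<psi>\<^sub>2 = (\<phi>\<^sub>1 - \<psi>\<^sub>1)\<phi>\<^sub>2 + \<psi>\<^sub>1(\<phi>\<^sub>2 - \<psi>\<^sub>2)\<close>, the Cauchy--Schwarz inequality
  in \<open>L\<^sup>2\<^sub>\<omega>\<close> bounds it by \<open>\<parallel>\<phi>\<^sub>1 - \<psi>\<^sub>1\<parallel> \<parallel>\<phi>\<^sub>2\<parallel> + \<parallel>\<psi>\<^sub>1\<parallel> \<parallel>\<phi>\<^sub>2 - \<psi>\<^sub>2\<parallel>\<close>, which is dominated by
  the symmetric right-hand side.
\<close>

lemma set_borel_measurable_mult:
  fixes f g :: "'a \<Rightarrow> real"
  assumes "set_borel_measurable M A f" "set_borel_measurable M A g"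
  shows "set_borel_measurable M A (\<lambda>t. f t * g t)"
proof -
  have "(\<lambda>t. indicator A t *\<^sub>R (f t * g t)) = (\<lambda>t. (indicator A t *\<^sub>R f t) * (indicator A t *\<^sub>R g t))"
    by (auto simp: indicator_def fun_eq_iff)
  then show ?thesis
    using assms unfolding set_borel_measurable_def by (simp add: borel_measurable_times)
qed

lemma set_borel_measurable_diff:
  fixes f g :: "'a \<Rightarrow> real"
  assumes "set_borel_measurable M A f" "set_borel_measurable M A g"
  shows "set_borel_measurable M A (\<lambda>t. f t - g t)"
proof -
  have "(\<lambda>t. indicator A t *\<^sub>R (f t - g t)) = (\<lambda>t. (indicator A t *\<^sub>R f t) - (indicator A t *\<^sub>R g t))"
    by (auto simp: indicator_def fun_eq_iff)
  then show ?thesis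
    using assms unfolding set_borel_measurable_def by (simp add: borel_measurable_diff)
qed

lemma set_integral_nonneg:
  fixes h :: "'a \<Rightarrow> real"
  assumes "\<And>t. t \<in> A \<Longrightarrow> 0 \<le> h t"
  shows "0 \<le> (LINT t:A|M. h t)"
  unfolding set_lebesgue_integral_def
  by (intro integral_nonneg_AE AE_I2) (auto simp: indicator_def assms)

lemma abs_mult_le_half_sum_squares:
  fixes a b :: real
  shows "\<bar>a * b\<bar> \<le> (a\<^sup>2 + b\<^sup>2) / 2"
proof -
  have "0 \<le> (\<bar>a\<bar> - \<bar>b\<bar>)\<^sup>2" by simp
  then show ?thesis by (simp add: power2_diff abs_mult)
qed

lemma discriminant_le_of_quadratic_nonneg:
  fixes A B C :: real
  assumes nonneg: "\<And>s. 0 \<le> s\<^sup>2 * A + 2 * s * C + B" and "0 \<le> A"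
  shows "C\<^sup>2 \<le> A * B"
proof (cases "A = 0")
  case True
  show ?thesis
  proof (rule ccontr)
    assume "\<not> ?thesis"
    with True have "C \<noteq> 0" by auto
    have "0 \<le> (-(B + 1) / (2 * C))\<^sup>2 * A + 2 * (-(B + 1) / (2 * C)) * C + B" by (rule nonneg)
    also have "\<dots> = -1" using True \<open>C \<noteq> 0\<close> by (simp add: field_simps)
    finally show False by simp
  qed
next
  case False
  with \<open>0 \<le> A\<close> have "0 < A" by simp
  have "0 \<le> (-C / A)\<^sup>2 * A + 2 * (-C / A) * C + B" by (rule nonneg)
  also have "\<dots> = B - C\<^sup>2 / A" using \<open>0 < A\<close> by (simp add: field_simps power2_eq_square)
  finally show ?thesis using \<open>0 < A\<close> by (simp add: field_simps mult.commute)
qed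

context
  fixes X :: "real set" and w :: "real \<Rightarrow> real"
  assumes w_meas: "set_borel_measurable lborel X w"
    and w_nonneg: "\<And>t. t \<in> X \<Longrightarrow> 0 \<le> w t"
begin

lemma in_L2w_mult_integrable:
  assumes f: "in_L2w X w f" and g: "in_L2w X w g"
  shows "set_integrable lborel X (\<lambda>t. f t * g t * w t)"
proof (rule set_integrable_bound)
  show "set_integrable lborel X (\<lambda>t. ((f t)\<^sup>2 * w t + (g t)\<^sup>2 * w t) / 2)"
    using f g unfolding in_L2w_def by (intro set_integrable_divide set_integral_add) auto
  show "set_borel_measurable lborel X (\<lambda>t. f t * g t * w t)"
    using f g w_meas unfolding in_L2w_def by (intro set_borel_measurable_mult) auto
  show "AE t in lborel. t \<in> X \<longrightarrow> norm (f t * g t * w t) \<le> norm (((f t)\<^sup>2 * w t + (g t)\<^sup>2 * w t) / 2)"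
  proof (intro AE_I2 impI)
    fix t assume "t \<in> X"
    then have "0 \<le> w t" by (rule w_nonneg)
    then have "\<bar>f t * g t\<bar> * w t \<le> ((f t)\<^sup>2 + (g t)\<^sup>2) / 2 * w t"
      by (intro mult_right_mono abs_mult_le_half_sum_squares)
    with \<open>0 \<le> w t\<close> show "norm (f t * g t * w t) \<le> norm (((f t)\<^sup>2 * w t + (g t)\<^sup>2 * w t) / 2)"
      by (simp add: abs_mult algebra_simps)
  qed
qed

lemma in_L2w_diff:
  assumes f: "in_L2w X w f" and g: "in_L2w X w g"
  shows "in_L2w X w (\<lambda>t. f t - g t)"
proof -
  have "(\<lambda>t. (f t - g t)\<^sup>2 * w t) = (\<lambda>t. ((f t)\<^sup>2 * w t + (g t)\<^sup>2 * w t) - 2 * (f t * g t * w t))"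
    by (auto simp: fun_eq_iff power2_eq_square algebra_simps)
  then show ?thesis
    using f g in_L2w_mult_integrable[OF f g] unfolding in_L2w_def
    by (auto intro!: set_borel_measurable_diff)
qed

lemma wnorm_nonneg: "0 \<le> wnorm X w f"
  unfolding wnorm_def by (intro real_sqrt_ge_zero set_integral_nonneg) (simp add: w_nonneg)

lemma wnorm_Cauchy_Schwarz:
  assumes f: "in_L2w X w f" and g: "in_L2w X w g"
  shows "\<bar>LINT t:X|lborel. f t * g t * w t\<bar> \<le> wnorm X w f * wnorm X w g"
proof -
  define A where "A = (LINT t:X|lborel. f t * f t * w t)"
  define B where "B = (LINT t:X|lborel. g t * g t * w t)"
  define C where "C = (LINT t:X|lborel. f t * g t * w t)"
  note integrable = in_L2w_mult_integrable
  have "0 \<le> s\<^sup>2 * A + 2 * s * C + B" for s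
  proof -
    have "0 \<le> (LINT t:X|lborel. (s * f t + g t)\<^sup>2 * w t)"
      by (rule set_integral_nonneg) (simp add: w_nonneg)
    also have "\<dots> = (LINT t:X|lborel. (s\<^sup>2 * (f t * f t * w t) + (2 * s) * (f t * g t * w t)) + g t * g t * w t)"
      by (intro arg_cong[where f="set_lebesgue_integral lborel X"]) (auto simp: fun_eq_iff power2_eq_square algebra_simps)
    also have "\<dots> = s\<^sup>2 * A + 2 * s * C + B"
      unfolding A_def B_def C_def using integrable[OF f f] integrable[OF f g] integrable[OF g g] by simp
    finally show ?thesis .
  qed
  moreover have "0 \<le> A"
    unfolding A_def by (rule set_integral_nonneg) (simp add: w_nonneg)
  ultimately have "sqrt (C\<^sup>2) \<le> sqrt (A * B)"
    by (intro real_sqrt_le_mono discriminant_le_of_quadratic_nonneg)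
  moreover have "wnorm X w f = sqrt A" "wnorm X w g = sqrt B"
    unfolding wnorm_def A_def B_def by (simp_all add: power2_eq_square)
  ultimately show ?thesis by (simp add: C_def real_sqrt_mult)
qed

lemma wint_mult_diff_le:
  assumes f: "in_L2w X w f" and g: "in_L2w X w g" and p: "in_L2w X w p" and q: "in_L2w X w q"
  shows "\<bar>wint X w (\<lambda>t. f t * g t) - wint X w (\<lambda>t. p t * q t)\<bar>
    \<le> wnorm X w (\<lambda>t. f t - p t) * wnorm X w g + wnorm X w p * wnorm X w (\<lambda>t. g t - q t)"
proof -
  note integrable = in_L2w_mult_integrable
  have "wint X w (\<lambda>t. f t * g t) - wint X w (\<lambda>t. p t * q t)
      = (LINT t:X|lborel. f t * g t * w t - p t * g t * w t)
      + (LINT t:X|lborel. p t * g t * w t - p t * q t * w t)"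
    using integrable[OF f g] integrable[OF p g] integrable[OF p q] by (simp add: wint_def)
  also have "\<dots> = (LINT t:X|lborel. (f t - p t) * g t * w t) + (LINT t:X|lborel. p t * (g t - q t) * w t)"
    by (simp add: algebra_simps)
  finally have error_split: "wint X w (\<lambda>t. f t * g t) - wint X w (\<lambda>t. p t * q t)
      = (LINT t:X|lborel. (f t - p t) * g t * w t) + (LINT t:X|lborel. p t * (g t - q t) * w t)" .
  have "\<bar>wint X w (\<lambda>t. f t * g t) - wint X w (\<lambda>t. p t * q t)\<bar>
      \<le> \<bar>LINT t:X|lborel. (f t - p t) * g t * w t\<bar> + \<bar>LINT t:X|lborel. p t * (g t - q t) * w t\<bar>"
    unfolding error_split by (rule abs_triangle_ineq)
  also have "\<dots> \<le> wnorm X w (\<lambda>t. f t - p t) * wnorm X w g + wnorm X w p * wnorm X w (\<lambda>t. g t - q t)"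
    by (intro add_mono wnorm_Cauchy_Schwarz in_L2w_diff[OF f p] in_L2w_diff[OF g q] g p)
  finally show ?thesis .
qed

end

lemma interpolating_poly_exists:
  fixes x :: "nat \<Rightarrow> real"
  assumes inj: "inj_on x {..N}"
  shows "\<exists>p. degree p \<le> N \<and> (\<forall>i\<le>N. poly p (x i) = f (x i))"
proof -
  define L where "L i = (\<Prod>j\<in>{..N}-{i}. [:-x j, 1:])" for i
  define p where "p = (\<Sum>i\<le>N. smult (f (x i) / poly (L i) (x i)) (L i))"
  have degree_L: "degree (L i) \<le> N" if "i \<le> N" for i
  proof -
    have "degree (L i) \<le> (\<Sum>j\<in>{..N}-{i}. degree [:-x j, 1:])"
      unfolding L_def using degree_prod_sum_le[of "{..N}-{i}" "\<lambda>j. [:-x j, 1:]"] by (simp add: o_def)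
    also have "\<dots> = N" using that by simp
    finally show ?thesis .
  qed
  have "degree p \<le> N" unfolding p_def
    by (rule degree_sum_le) (auto intro: order.trans[OF degree_smult_le] degree_L)
  moreover have "poly p (x k) = f (x k)" if "k \<le> N" for k
  proof -
    have "poly (L i) (x k) = 0" if "i \<le> N" "i \<noteq> k" for i
      unfolding L_def poly_prod using \<open>k \<le> N\<close> that by (auto simp: prod_zero_iff)
    moreover have "poly (L k) (x k) \<noteq> 0"
      unfolding L_def poly_prod using \<open>k \<le> N\<close> inj by (auto simp: prod_zero_iff inj_on_def)
    ultimately have "poly p (x k) = (\<Sum>i\<le>N. if i = k then f (x k) else 0)"
      unfolding p_def poly_sum poly_smult by (intro sum.cong) auto
    also have "\<dots> = f (x k)" using \<open>k \<le> N\<close> by simp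
    finally show ?thesis .
  qed
  ultimately show ?thesis by blast
qed

lemma interpolating_poly_unique:
  fixes x :: "nat \<Rightarrow> real"
  assumes inj: "inj_on x {..N}"
    and p: "degree p \<le> N" "\<forall>i\<le>N. poly p (x i) = f (x i)"
    and q: "degree q \<le> N" "\<forall>i\<le>N. poly q (x i) = f (x i)"
  shows "p = q"
proof (rule poly_eqI_degree[where A="x ` {..N}"])
  have "card (x ` {..N}) = Suc N" using inj by (simp add: card_image)
  then show "degree p < card (x ` {..N})" "degree q < card (x ` {..N})" using p q by auto
  show "\<And>y. y \<in> x ` {..N} \<Longrightarrow> poly p y = poly q y" using p q by auto
qed

lemma interp_eq_poly:
  fixes x :: "nat \<Rightarrow> real"
  assumes inj: "inj_on x {..N}"
  obtains p where "interp x N f = poly p" "degree p \<le> N" "\<forall>i\<le>N. poly p (x i) = f (x i)"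
proof -
  let ?P = "\<lambda>p. degree p \<le> N \<and> (\<forall>i\<le>N. poly p (x i) = f (x i))"
  have "\<exists>!p. ?P p"
    using interpolating_poly_exists[OF inj] interpolating_poly_unique[OF inj] by blast
  then have "?P (THE p. ?P p)" by (rule theI')
  moreover have "interp x N f = poly (THE p. ?P p)" unfolding interp_def ..
  ultimately show ?thesis using that by blast
qed

lemma quadrature_mult_interpolants:
  assumes exact: "\<And>p :: real poly. degree p \<le> 2 * N \<Longrightarrow>
                  (\<Sum>i\<le>N. wq i * poly p (x i)) = wint X w (poly p)"
    and p: "degree p \<le> N" "\<forall>i\<le>N. poly p (x i) = f (x i)"
    and q: "degree q \<le> N" "\<forall>i\<le>N. poly q (x i) = g (x i)"
  shows "(\<Sum>i\<le>N. wq i * (f (x i) * g (x i))) = wint X w (\<lambda>t. poly p t * poly q t)"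
proof -
  have "degree (p * q) \<le> 2 * N" using degree_mult_le[of p q] p q by simp
  then have "(\<Sum>i\<le>N. wq i * poly (p * q) (x i)) = wint X w (poly (p * q))" by (rule exact)
  moreover have "(\<Sum>i\<le>N. wq i * poly (p * q) (x i)) = (\<Sum>i\<le>N. wq i * (f (x i) * g (x i)))"
    using p q by (intro sum.cong) auto
  moreover have "poly (p * q) = (\<lambda>t. poly p t * poly q t)" by (simp add: fun_eq_iff)
  ultimately show ?thesis by simp
qed

theorem mainTheorem11:
  fixes X :: "real set" and w :: "real \<Rightarrow> real" and N :: nat
    and x :: "nat \<Rightarrow> real" and wq :: "nat \<Rightarrow> real"
    and \<phi>1 \<phi>2 :: "real \<Rightarrow> real"
  assumes X_int: "is_interval X"
    and w_meas: "set_borel_measurable lborel X w"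
    and w_nonneg: "\<And>t. t \<in> X \<Longrightarrow> w t \<ge> 0"
    and nodes_in: "\<And>i. i \<le> N \<Longrightarrow> x i \<in> X"
    and nodes_distinct: "inj_on x {0..N}"
    and exact: "\<And>p :: real poly. degree p \<le> 2 * N \<Longrightarrow>
                  (\<Sum>i\<le>N. wq i * poly p (x i)) = wint X w (poly p)"
    and PN_L2: "\<And>p :: real poly. degree p \<le> N \<Longrightarrow> in_L2w X w (poly p)"
    and cont1: "continuous_on X \<phi>1" and cont2: "continuous_on X \<phi>2"
    and L2_1: "in_L2w X w \<phi>1" and L2_2: "in_L2w X w \<phi>2"
  shows "\<bar>wint X w (\<lambda>t. \<phi>1 t * \<phi>2 t) - (\<Sum>i\<le>N. wq i * (\<phi>1 (x i) * \<phi>2 (x i)))\<bar>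
         \<le> (wnorm X w \<phi>1 + wnorm X w \<phi>2 + wnorm X w (interp x N \<phi>1) + wnorm X w (interp x N \<phi>2))
           * (wnorm X w (\<lambda>t. \<phi>1 t - interp x N \<phi>1 t) + wnorm X w (\<lambda>t. \<phi>2 t - interp x N \<phi>2 t))"
proof -
  have inj: "inj_on x {..N}" using nodes_distinct by (simp add: atLeast0AtMost)
  obtain p1 where \<psi>1: "interp x N \<phi>1 = poly p1" and p1: "degree p1 \<le> N" "\<forall>i\<le>N. poly p1 (x i) = \<phi>1 (x i)"
    using interp_eq_poly[OF inj] .
  obtain p2 where \<psi>2: "interp x N \<phi>2 = poly p2" and p2: "degree p2 \<le> N" "\<forall>i\<le>N. poly p2 (x i) = \<phi>2 (x i)"
    using interp_eq_poly[OF inj] .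
  let ?n = "wnorm X w"
  have weaken: "e * b + c * f \<le> (a + b + c + d) * (e + f)"
    if "0 \<le> a" "0 \<le> b" "0 \<le> c" "0 \<le> d" "0 \<le> e" "0 \<le> f" for a b c d e f :: real
    using that by (simp add: algebra_simps add_increasing)
  have quadrature: "(\<Sum>i\<le>N. wq i * (\<phi>1 (x i) * \<phi>2 (x i))) = wint X w (\<lambda>t. poly p1 t * poly p2 t)"
    using p1 p2 by (intro quadrature_mult_interpolants exact)
  have "\<bar>wint X w (\<lambda>t. \<phi>1 t * \<phi>2 t) - (\<Sum>i\<le>N. wq i * (\<phi>1 (x i) * \<phi>2 (x i)))\<bar>
      \<le> ?n (\<lambda>t. \<phi>1 t - poly p1 t) * ?n \<phi>2 + ?n (poly p1) * ?n (\<lambda>t. \<phi>2 t - poly p2 t)"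
    unfolding quadrature
    by (rule wint_mult_diff_le[OF w_meas w_nonneg L2_1 L2_2 PN_L2[OF p1(1)] PN_L2[OF p2(1)]])
  also have "\<dots> \<le> (?n \<phi>1 + ?n \<phi>2 + ?n (poly p1) + ?n (poly p2))
                 * (?n (\<lambda>t. \<phi>1 t - poly p1 t) + ?n (\<lambda>t. \<phi>2 t - poly p2 t))"
    by (intro weaken wnorm_nonneg w_meas w_nonneg)
  finally show ?thesis unfolding \<psi>1 \<psi>2 .
qed

end
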